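(* Let $\mathfrak p,\mathfrak q$ be positive integers, $\omega=\mathfrak p/\mathfrak q$, $\nu=1/\mathfrak q$, and $\varepsilon=\omega^{2/(\alpha+1)}$. Then the function $$h(x,\tau)=\sum_{j=1}^n m_j\big[\phi_\alpha(\|x-\varepsilon x_j(\tau)\|)-\phi_\alpha(\|x\|)\big],\qquad x_j(\tau)=e^{-J\omega\tau/\nu}q_j(\tau/\nu),$$ is $2\pi$-periodic in $\tau$, and $\nabla_xh(x,\tau)=\mathcal O(\varepsilon^2)$.
   Context: Let $n\ge2$, $\alpha\ge1$, masses $m_1,\dots,m_n>0$ with $\sum_j m_j=1$, and let $q_1,\dots,q_n:\mathbb R\to\mathbb R^2$ be a collision-free $2\pi$-periodic solution of the $n$-body problem $\ddot q_j=-\sum_{k\ne j}m_k\frac{q_j-q_k}{\|q_j-q_k\|^{\alpha+1}}$ with center of mass $\sum_jm_jq_j(t)=0$. $\phi_\alpha(\lambda)=\frac1{\alpha-1}\lambda^{1-\alpha}$ for $\alpha>1$, $\phi_1(\lambda)=-\log\lambda$. $J=\begin{pmatrix}0&1\\-1&0\end{pmatrix}$, $e^{J\theta}=\cos\theta\,I+\sin\theta\,J$. The estimate $\mathcal O(\varepsilon^2)$ is meant as $\varepsilon\to0$, uniformly in $\tau$ and in $x$ ranging over compact subsets of $\mathbb R^2\setminus\{0\}$. *)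

theory Defs
  imports "HOL-Analysis.Analysis"
begin

definition Jmat :: "real^2^2" where
  "Jmat = vector [vector [0, 1], vector [-1, 0]]"

definition expJ :: "real \<Rightarrow> real^2^2" where
  "expJ \<theta> = cos \<theta> *\<^sub>R mat 1 + sin \<theta> *\<^sub>R Jmat"

definition phi :: "real \<Rightarrow> real \<Rightarrow> real" where
  "phi \<alpha> r = (if \<alpha> = 1 then - ln r else (1 / (\<alpha> - 1)) * r powr (1 - \<alpha>))"

definition omega :: "nat \<Rightarrow> nat \<Rightarrow> real" where
  "omega pp qq = real pp / real qq"

definition nu :: "nat \<Rightarrow> real" where
  "nu qq = 1 / real qq"

definition eps :: "real \<Rightarrow> nat \<Rightarrow> nat \<Rightarrow> real" where
  "eps \<alpha> pp qq = omega pp qq powr (2 / (\<alpha> + 1))"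

definition xbody :: "(nat \<Rightarrow> real \<Rightarrow> real^2) \<Rightarrow> nat \<Rightarrow> nat \<Rightarrow> nat \<Rightarrow> real \<Rightarrow> real^2" where
  "xbody q pp qq j \<tau> = expJ (- omega pp qq * \<tau> / nu qq) *v q j (\<tau> / nu qq)"

definition hfun :: "nat \<Rightarrow> real \<Rightarrow> (nat \<Rightarrow> real) \<Rightarrow> (nat \<Rightarrow> real \<Rightarrow> real^2)
    \<Rightarrow> nat \<Rightarrow> nat \<Rightarrow> real^2 \<Rightarrow> real \<Rightarrow> real" where
  "hfun n \<alpha> m q pp qq x \<tau> =
     (\<Sum>j\<in>{1..n}. m j * (phi \<alpha> (norm (x - eps \<alpha> pp qq *\<^sub>R xbody q pp qq j \<tau>)) - phi \<alpha> (norm x)))"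

end

theory Submission
  imports Defs "HOL-Library.Periodic_Fun"
begin

(* The bodies x_j(tau) are 2 pi-periodic because omega/nu = p and 1/nu = q are integers.
   The x-gradient of h is sum_j m_j (K(x) - K(x - eps x_j)) with K(y) = |y|^(-(alpha+1)) y.
   Expanding K to first order at x, the linear terms cancel because the centre of mass
   sum_j m_j x_j vanishes, leaving a remainder quadratic in |eps x_j| <= eps max |q_j|.
   The expansion goes through the scalar function s -> s^(-(alpha+1)/2) at s = |x|^2, whose
   derivatives are bounded on compact sets avoiding the origin. *)

lemma power2_powr_half:
  fixes r c :: real
  assumes "0 \<le> r"
  shows "(r\<^sup>2) powr (c / 2) = r powr c"
proof (cases "r = 0")
  case False
  then have "r\<^sup>2 = r powr 2"
    using assms by (simp add: powr_realpow)
  then show ?thesis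
    by (simp add: powr_powr)
qed simp

lemma powr_neg_diff_le:
  fixes a g s t :: real
  assumes "0 < a" "0 \<le> g" "a \<le> s" "a \<le> s + t"
  shows "\<bar>(s + t) powr (-g) - s powr (-g)\<bar> \<le> g * a powr (-g-1) * \<bar>t\<bar>"
proof -
  have "norm ((s + t) powr (-g) - s powr (-g)) \<le> g * a powr (-g-1) * norm (s + t - s)"
  proof (rule field_differentiable_bound[of "{a..}"])
    fix u assume u: "u \<in> {a..}"
    then show "((\<lambda>u. u powr (-g)) has_field_derivative - g * u powr (-g-1)) (at u within {a..})"
      using assms(1) by (auto intro!: derivative_eq_intros)
    show "norm (- g * u powr (-g-1)) \<le> g * a powr (-g-1)"
      using u assms by (auto simp: abs_mult intro!: mult_left_mono powr_mono2')
  qed (use assms in auto)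
  then show ?thesis by simp
qed

lemma powr_neg_taylor2_le:
  fixes a g s t :: real
  assumes "0 < a" "0 \<le> g" "a \<le> s" "a \<le> s + t"
  shows "\<bar>(s + t) powr (-g) - s powr (-g) + g * s powr (-g-1) * t\<bar> \<le> g * (g+1) * a powr (-g-2) / 2 * t\<^sup>2"
proof (cases "t = 0")
  case False
  define f :: "nat \<Rightarrow> real \<Rightarrow> real" where
    "f k u = (if k = 0 then u powr (-g) else if k = 1 then - g * u powr (-g-1) else g * (g+1) * u powr (-g-2))"
    for k u
  have f0: "f 0 = (\<lambda>u. u powr (-g))"
    by (simp add: f_def fun_eq_iff)
  have "DERIV (f k) u :> f (Suc k) u" if "k < 2" "a \<le> u" for k u
    using that assms(1) unfolding f_def less_2_cases_iff
    by (elim disjE) (auto intro!: derivative_eq_intros simp: algebra_simps)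
  then have "\<forall>k u. k < 2 \<and> a \<le> u \<and> u \<le> max s (s + t) \<longrightarrow> DERIV (f k) u :> f (Suc k) u"
    by blast
  moreover have "s + t \<noteq> s"
    using False by simp
  ultimately have "\<exists>\<xi>. (if s + t < s then s + t < \<xi> \<and> \<xi> < s else s < \<xi> \<and> \<xi> < s + t) \<and>
      (s + t) powr (-g) = (\<Sum>k<2. f k s / fact k * (s + t - s) ^ k) + f 2 \<xi> / fact 2 * (s + t - s) ^ 2"
    using Taylor[of 2 f "\<lambda>u. u powr (-g)" a "max s (s + t)" s "s + t",
        OF pos2 f0 _ assms(3) max.cobounded1 assms(4) max.cobounded2] by blast
  then obtain \<xi> where \<xi>: "if s + t < s then s + t < \<xi> \<and> \<xi> < s else s < \<xi> \<and> \<xi> < s + t"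
    and "(s + t) powr (-g) = (\<Sum>k<2. f k s / fact k * (s + t - s) ^ k) + f 2 \<xi> / fact 2 * (s + t - s) ^ 2"
    by blast
  then have taylor: "(s + t) powr (-g) - s powr (-g) + g * s powr (-g-1) * t
      = g * (g+1) * \<xi> powr (-g-2) / 2 * t\<^sup>2"
    by (simp add: f_def eval_nat_numeral)
  have "\<xi> powr (-g-2) \<le> a powr (-g-2)"
    using \<xi> assms by (intro powr_mono2') (auto split: if_splits)
  then have "g * (g+1) * \<xi> powr (-g-2) / 2 * t\<^sup>2 \<le> g * (g+1) * a powr (-g-2) / 2 * t\<^sup>2"
    using assms(2) by (intro mult_right_mono divide_right_mono mult_left_mono) auto
  moreover have "0 \<le> g * (g+1) * \<xi> powr (-g-2) / 2 * t\<^sup>2"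
    using assms(2) by simp
  ultimately show ?thesis
    unfolding taylor by simp
qed simp

lemma norm_diff_square_bounds:
  fixes x v :: "'a::real_inner"
  assumes "0 < d" "d \<le> norm x" "norm x \<le> B" "norm v \<le> d / 2"
  shows "d\<^sup>2 / 4 \<le> (norm x)\<^sup>2" and "d\<^sup>2 / 4 \<le> (norm (x - v))\<^sup>2"
    and "\<bar>(norm (x - v))\<^sup>2 - (norm x)\<^sup>2\<bar> \<le> 3 * B * norm v"
proof -
  have "d / 2 \<le> norm x" "d / 2 \<le> norm (x - v)"
    using assms norm_triangle_ineq2[of x v] by linarith+
  then show "d\<^sup>2 / 4 \<le> (norm x)\<^sup>2" "d\<^sup>2 / 4 \<le> (norm (x - v))\<^sup>2"
    using power_mono[of "d / 2" _ 2] assms(1) by (auto simp: power_divide)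
  have "(norm (x - v))\<^sup>2 - (norm x)\<^sup>2 = (norm v)\<^sup>2 - 2 * (x \<bullet> v)"
    by (simp add: power2_norm_eq_inner inner_diff_left inner_diff_right inner_commute)
  moreover have "\<bar>x \<bullet> v\<bar> \<le> B * norm v"
    using Cauchy_Schwarz_ineq2[of x v] mult_right_mono[OF assms(3) norm_ge_zero[of v]] by linarith
  moreover have "(norm v)\<^sup>2 \<le> B * norm v"
    using assms mult_right_mono[of "norm v" B "norm v"] by (simp add: power2_eq_square)
  ultimately show "\<bar>(norm (x - v))\<^sup>2 - (norm x)\<^sup>2\<bar> \<le> 3 * B * norm v"
    using zero_le_power2[of "norm v"] by arith
qed

lemma norm_powr_neg_diff_le:
  fixes x v :: "'a::real_inner"
  assumes "0 < a" "0 \<le> b" "a \<le> (norm x)\<^sup>2" "a \<le> (norm (x - v))\<^sup>2"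
  shows "\<bar>norm (x - v) powr (-b) - norm x powr (-b)\<bar>
    \<le> b / 2 * a powr (-(b/2) - 1) * \<bar>(norm (x - v))\<^sup>2 - (norm x)\<^sup>2\<bar>"
  using powr_neg_diff_le[of a "b / 2" "(norm x)\<^sup>2" "(norm (x - v))\<^sup>2 - (norm x)\<^sup>2"] assms
    power2_powr_half[of "norm (x - v)" "-b"] power2_powr_half[of "norm x" "-b"]
  by simp

lemma norm_powr_neg_taylor_le:
  fixes x v :: "'a::real_inner"
  assumes "0 < a" "0 \<le> b" "a \<le> (norm x)\<^sup>2" "a \<le> (norm (x - v))\<^sup>2"
  shows "\<bar>norm (x - v) powr (-b) - norm x powr (-b) - b * norm x powr (-b-2) * (x \<bullet> v)\<bar>
    \<le> b / 2 * (b / 2 + 1) * a powr (-(b/2) - 2) / 2 * ((norm (x - v))\<^sup>2 - (norm x)\<^sup>2)\<^sup>2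
      + b / 2 * a powr (-(b/2) - 1) * (norm v)\<^sup>2"
proof -
  define g s t where "g = b / 2" and "s = (norm x)\<^sup>2" and "t = (norm (x - v))\<^sup>2 - (norm x)\<^sup>2"
  have powers: "norm (x - v) powr (-b) = (s + t) powr (-g)" "norm x powr (-b) = s powr (-g)"
      "norm x powr (-b-2) = s powr (-g-1)"
    using power2_powr_half[of "norm (x - v)" "-b"] power2_powr_half[of "norm x" "-b"]
      power2_powr_half[of "norm x" "-b-2"]
    by (simp_all add: s_def t_def g_def diff_divide_distrib)
  have t_eq: "t = (norm v)\<^sup>2 - 2 * (x \<bullet> v)"
    by (simp add: t_def power2_norm_eq_inner inner_diff_left inner_diff_right inner_commute)
  have b_eq: "b = 2 * g"
    by (simp add: g_def)
  have split: "(s + t) powr (-g) - s powr (-g) - b * s powr (-g-1) * (x \<bullet> v)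
      = ((s + t) powr (-g) - s powr (-g) + g * s powr (-g-1) * t) - g * s powr (-g-1) * (norm v)\<^sup>2"
    unfolding t_eq b_eq by (simp add: algebra_simps)
  have "\<bar>(s + t) powr (-g) - s powr (-g) + g * s powr (-g-1) * t\<bar> \<le> g * (g+1) * a powr (-g-2) / 2 * t\<^sup>2"
    using powr_neg_taylor2_le[of a g s t] assms by (simp add: g_def s_def t_def)
  moreover have "g * s powr (-g-1) \<le> g * a powr (-g-1)"
    using assms unfolding g_def s_def by (auto intro!: mult_left_mono powr_mono2')
  then have "g * s powr (-g-1) * (norm v)\<^sup>2 \<le> g * a powr (-g-1) * (norm v)\<^sup>2"
    by (simp add: mult_right_mono)
  moreover have "0 \<le> g * s powr (-g-1) * (norm v)\<^sup>2"
    using assms by (simp add: g_def)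
  ultimately show ?thesis
    unfolding powers split by (fold g_def t_def) arith
qed

lemma norm_powr_neg_expansion:
  fixes b d B :: real
  assumes "0 < b" "0 < d" "d \<le> B"
  obtains C where "0 \<le> C"
    and "\<And>x v :: 'a::real_inner. d \<le> norm x \<Longrightarrow> norm x \<le> B \<Longrightarrow> norm v \<le> d / 2 \<Longrightarrow>
           \<bar>norm (x - v) powr (-b) - norm x powr (-b)\<bar> \<le> C * norm v"
    and "\<And>x v :: 'a. d \<le> norm x \<Longrightarrow> norm x \<le> B \<Longrightarrow> norm v \<le> d / 2 \<Longrightarrow>
           \<bar>norm (x - v) powr (-b) - norm x powr (-b) - b * norm x powr (-b-2) * (x \<bullet> v)\<bar>
             \<le> C * (norm v)\<^sup>2"
proof -
  define a L M where "a = d\<^sup>2 / 4" and "L = b / 2 * a powr (-(b/2) - 1)"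
    and "M = b / 2 * (b / 2 + 1) * a powr (-(b/2) - 2) / 2"
  have nonneg: "0 < a" "0 \<le> b" "0 \<le> L" "0 \<le> M" "0 \<le> B"
    using assms by (auto simp: a_def L_def M_def)
  show thesis
  proof (rule that[of "3 * B * L + 9 * B\<^sup>2 * M + L"])
    show "0 \<le> 3 * B * L + 9 * B\<^sup>2 * M + L"
      using nonneg by simp
  next
    fix x v :: 'a
    assume "d \<le> norm x" "norm x \<le> B" "norm v \<le> d / 2"
    note sq = norm_diff_square_bounds[OF assms(2) this, folded a_def]
    have "\<bar>norm (x - v) powr (-b) - norm x powr (-b)\<bar> \<le> L * (3 * B * norm v)"
      using norm_powr_neg_diff_le[OF nonneg(1,2) sq(1,2)] mult_left_mono[OF sq(3) nonneg(3)]
      unfolding L_def by linarith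
    moreover have "0 \<le> (9 * B\<^sup>2 * M + L) * norm v"
      using nonneg by simp
    ultimately show "\<bar>norm (x - v) powr (-b) - norm x powr (-b)\<bar> \<le> (3 * B * L + 9 * B\<^sup>2 * M + L) * norm v"
      by (simp add: algebra_simps)
  next
    fix x v :: 'a
    assume "d \<le> norm x" "norm x \<le> B" "norm v \<le> d / 2"
    note sq = norm_diff_square_bounds[OF assms(2) this, folded a_def]
    have "((norm (x - v))\<^sup>2 - (norm x)\<^sup>2)\<^sup>2 \<le> (3 * B * norm v)\<^sup>2"
      using power_mono[OF sq(3) abs_ge_zero, of 2] by simp
    then have "\<bar>norm (x - v) powr (-b) - norm x powr (-b) - b * norm x powr (-b-2) * (x \<bullet> v)\<bar>
        \<le> M * (3 * B * norm v)\<^sup>2 + L * (norm v)\<^sup>2"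
      using norm_powr_neg_taylor_le[OF nonneg(1,2) sq(1,2)] mult_left_mono[OF _ nonneg(4)]
      unfolding L_def M_def by fastforce
    moreover have "(3 * B * L + 9 * B\<^sup>2 * M + L) * (norm v)\<^sup>2
        = M * (3 * B * norm v)\<^sup>2 + L * (norm v)\<^sup>2 + 3 * B * L * (norm v)\<^sup>2"
      by (simp add: algebra_simps power_mult_distrib)
    moreover have "0 \<le> 3 * B * L * (norm v)\<^sup>2"
      using nonneg by simp
    ultimately show "\<bar>norm (x - v) powr (-b) - norm x powr (-b) - b * norm x powr (-b-2) * (x \<bullet> v)\<bar>
        \<le> (3 * B * L + 9 * B\<^sup>2 * M + L) * (norm v)\<^sup>2"
      by linarith
  qed
qed

definition radial_kernel :: "real \<Rightarrow> 'a::real_normed_vector \<Rightarrow> 'a" where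
  "radial_kernel b y = norm y powr (-b) *\<^sub>R y"

lemma radial_kernel_weighted_difference:
  assumes "(\<Sum>j\<in>S. m j *\<^sub>R v j) = 0"
  shows "(\<Sum>j\<in>S. m j *\<^sub>R (radial_kernel b x - radial_kernel b (x - v j)))
    = (\<Sum>j\<in>S. (m j * (norm (x - v j) powr (-b) - norm x powr (-b))) *\<^sub>R v j)
      - (\<Sum>j\<in>S. m j * (norm (x - v j) powr (-b) - norm x powr (-b))) *\<^sub>R x"
proof -
  define D where "D j = norm (x - v j) powr (-b) - norm x powr (-b)" for j
  have "(\<Sum>j\<in>S. m j *\<^sub>R (radial_kernel b x - radial_kernel b (x - v j)))
      = (\<Sum>j\<in>S. (m j * D j) *\<^sub>R v j - (m j * D j) *\<^sub>R x + norm x powr (-b) *\<^sub>R (m j *\<^sub>R v j))"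
    by (intro sum.cong) (simp_all add: radial_kernel_def D_def algebra_simps)
  also have "\<dots> = (\<Sum>j\<in>S. (m j * D j) *\<^sub>R v j) - (\<Sum>j\<in>S. m j * D j) *\<^sub>R x
      + norm x powr (-b) *\<^sub>R (\<Sum>j\<in>S. m j *\<^sub>R v j)"
    by (simp only: sum.distrib sum_subtractf scaleR_sum_left scaleR_sum_right)
  finally show ?thesis
    using assms by (simp add: D_def)
qed

lemma radial_kernel_mean_difference_le:
  fixes b d B :: real
  assumes "0 < b" "0 < d" "d \<le> B"
  obtains C where "\<And>S m (v :: 'i \<Rightarrow> 'a::real_inner) x \<rho>.
      \<forall>j\<in>S. 0 \<le> m j \<Longrightarrow> sum m S = 1 \<Longrightarrow> (\<Sum>j\<in>S. m j *\<^sub>R v j) = 0 \<Longrightarrow>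
      \<forall>j\<in>S. norm (v j) \<le> \<rho> \<Longrightarrow> \<rho> \<le> d / 2 \<Longrightarrow> d \<le> norm x \<Longrightarrow> norm x \<le> B \<Longrightarrow>
      norm (\<Sum>j\<in>S. m j *\<^sub>R (radial_kernel b x - radial_kernel b (x - v j))) \<le> C * \<rho>\<^sup>2"
proof -
  obtain C where C0: "0 \<le> C"
    and lin: "\<And>x v :: 'a. d \<le> norm x \<Longrightarrow> norm x \<le> B \<Longrightarrow> norm v \<le> d / 2 \<Longrightarrow>
           \<bar>norm (x - v) powr (-b) - norm x powr (-b)\<bar> \<le> C * norm v"
    and quad: "\<And>x v :: 'a. d \<le> norm x \<Longrightarrow> norm x \<le> B \<Longrightarrow> norm v \<le> d / 2 \<Longrightarrow>
           \<bar>norm (x - v) powr (-b) - norm x powr (-b) - b * norm x powr (-b-2) * (x \<bullet> v)\<bar>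
             \<le> C * (norm v)\<^sup>2"
    using norm_powr_neg_expansion[OF assms] by metis
  show thesis
  proof (rule that[of "(B + 1) * C"])
    fix S m \<rho> and v :: "'i \<Rightarrow> 'a" and x :: 'a
    assume m: "\<forall>j\<in>S. 0 \<le> m j" "sum m S = 1" and centred: "(\<Sum>j\<in>S. m j *\<^sub>R v j) = 0"
      and v: "\<forall>j\<in>S. norm (v j) \<le> \<rho>" and \<rho>: "\<rho> \<le> d / 2" and x: "d \<le> norm x" "norm x \<le> B"
    define D where "D j = norm (x - v j) powr (-b) - norm x powr (-b)" for j
    have vd: "norm (v j) \<le> d / 2" and v2: "(norm (v j))\<^sup>2 \<le> \<rho>\<^sup>2" if "j \<in> S" for j
      using v \<rho> that by (auto intro: power_mono)
    \<comment> \<open>the first-order terms \<open>x \<bullet> v j\<close> cancel because the \<open>v j\<close> have weighted mean zero\<close>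
    have "(\<Sum>j\<in>S. m j * (b * norm x powr (-b-2) * (x \<bullet> v j)))
        = b * norm x powr (-b-2) * (x \<bullet> (\<Sum>j\<in>S. m j *\<^sub>R v j))"
      by (simp add: inner_sum_right sum_distrib_left algebra_simps)
    then have "(\<Sum>j\<in>S. m j * D j) = (\<Sum>j\<in>S. m j * (D j - b * norm x powr (-b-2) * (x \<bullet> v j)))"
      using centred by (simp add: right_diff_distrib sum_subtractf)
    also have "\<bar>\<dots>\<bar> \<le> (\<Sum>j\<in>S. m j * (C * \<rho>\<^sup>2))"
    proof (intro order_trans[OF sum_abs] sum_mono)
      fix j assume j: "j \<in> S"
      have "\<bar>D j - b * norm x powr (-b-2) * (x \<bullet> v j)\<bar> \<le> C * \<rho>\<^sup>2"
        using quad[OF x vd[OF j]] mult_left_mono[OF v2[OF j] C0] unfolding D_def by linarith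
      then show "\<bar>m j * (D j - b * norm x powr (-b-2) * (x \<bullet> v j))\<bar> \<le> m j * (C * \<rho>\<^sup>2)"
        using m(1) j by (simp add: abs_mult mult_left_mono)
    qed
    finally have "\<bar>\<Sum>j\<in>S. m j * D j\<bar> \<le> C * \<rho>\<^sup>2"
      using m(2) by (simp flip: sum_distrib_right)
    then have "norm ((\<Sum>j\<in>S. m j * D j) *\<^sub>R x) \<le> C * \<rho>\<^sup>2 * B"
      using x by (simp add: mult_mono)
    moreover have "norm (\<Sum>j\<in>S. (m j * D j) *\<^sub>R v j) \<le> (\<Sum>j\<in>S. m j * (C * \<rho>\<^sup>2))"
    proof (intro order_trans[OF norm_sum] sum_mono)
      fix j assume j: "j \<in> S"
      have "\<bar>D j\<bar> * norm (v j) \<le> C * norm (v j) * norm (v j)"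
        using lin[OF x vd[OF j]] unfolding D_def by (simp add: mult_right_mono)
      also have "\<dots> \<le> C * \<rho>\<^sup>2"
        using C0 v2[OF j] by (simp add: power2_eq_square mult.assoc mult_left_mono)
      finally show "norm ((m j * D j) *\<^sub>R v j) \<le> m j * (C * \<rho>\<^sup>2)"
        using m(1) j by (simp add: abs_mult mult.assoc mult_left_mono)
    qed
    moreover have "(\<Sum>j\<in>S. m j * (C * \<rho>\<^sup>2)) = C * \<rho>\<^sup>2"
      using m(2) by (simp flip: sum_distrib_right)
    ultimately show "norm (\<Sum>j\<in>S. m j *\<^sub>R (radial_kernel b x - radial_kernel b (x - v j)))
        \<le> (B + 1) * C * \<rho>\<^sup>2"
      unfolding radial_kernel_weighted_difference[OF centred] D_def[symmetric]
      using norm_triangle_ineq4[of "\<Sum>j\<in>S. (m j * D j) *\<^sub>R v j" "(\<Sum>j\<in>S. m j * D j) *\<^sub>R x"]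
      by (simp add: algebra_simps)
  qed
qed

lemma phi_has_real_derivative:
  assumes "1 \<le> \<alpha>" "0 < r"
  shows "(phi \<alpha> has_real_derivative - (r powr (-\<alpha>))) (at r)"
proof (cases "\<alpha> = 1")
  case True
  then have "phi \<alpha> = (\<lambda>r. - ln r)" and "r powr (-\<alpha>) = 1 / r"
    using assms by (auto simp: phi_def fun_eq_iff powr_minus divide_inverse)
  then show ?thesis
    using assms by (auto intro!: derivative_eq_intros)
next
  case False
  then have "phi \<alpha> = (\<lambda>r. 1 / (\<alpha> - 1) * r powr (1 - \<alpha>))"
    by (auto simp: phi_def fun_eq_iff)
  moreover have "((\<lambda>r. 1 / (\<alpha> - 1) * r powr (1 - \<alpha>)) has_real_derivative
      1 / (\<alpha> - 1) * ((1 - \<alpha>) * r powr (1 - \<alpha> - 1))) (at r)"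
    using assms(2) False by (auto intro!: derivative_eq_intros)
  moreover have "1 / (\<alpha> - 1) * ((1 - \<alpha>) * r powr (1 - \<alpha> - 1)) = - (r powr (-\<alpha>))"
    using False by (simp add: field_simps)
  ultimately show ?thesis
    by simp
qed

lemma phi_norm_diff_gderiv:
  fixes x c :: "'a::real_inner"
  assumes "1 \<le> \<alpha>" "x \<noteq> c"
  shows "GDERIV (\<lambda>y. phi \<alpha> (norm (y - c))) x :> - radial_kernel (\<alpha> + 1) (x - c)"
proof -
  have "GDERIV (\<lambda>y. norm (y - c)) x :> sgn (x - c)"
    using has_derivative_compose[OF has_derivative_diff[OF has_derivative_ident has_derivative_const]
        has_derivative_norm[of "x - c"]] assms(2)
    by (simp add: gderiv_def)
  from GDERIV_DERIV_compose[OF this phi_has_real_derivative[OF assms(1)]]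
  have "GDERIV (\<lambda>y. phi \<alpha> (norm (y - c))) x :> - (norm (x - c) powr (-\<alpha>) / norm (x - c)) *\<^sub>R (x - c)"
    using assms(2) by (simp add: sgn_div_norm divide_inverse)
  moreover have "norm (x - c) powr (-\<alpha>) / norm (x - c) = norm (x - c) powr (- (\<alpha> + 1))"
    using assms(2) by (simp add: powr_diff powr_minus field_simps)
  ultimately show ?thesis
    by (simp add: radial_kernel_def)
qed

lemma hfun_gderiv:
  assumes "1 \<le> \<alpha>" "x \<noteq> 0" "\<forall>j\<in>{1..n}. x \<noteq> eps \<alpha> pp qq *\<^sub>R xbody q pp qq j \<tau>"
  shows "GDERIV (\<lambda>y. hfun n \<alpha> m q pp qq y \<tau>) x :>
    (\<Sum>j\<in>{1..n}. m j *\<^sub>R (radial_kernel (\<alpha> + 1) x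
       - radial_kernel (\<alpha> + 1) (x - eps \<alpha> pp qq *\<^sub>R xbody q pp qq j \<tau>)))"
proof -
  let ?c = "\<lambda>j. eps \<alpha> pp qq *\<^sub>R xbody q pp qq j \<tau>"
  let ?G = "\<lambda>j. radial_kernel (\<alpha> + 1) x - radial_kernel (\<alpha> + 1) (x - ?c j)"
  have "GDERIV (\<lambda>y. phi \<alpha> (norm (y - ?c j)) - phi \<alpha> (norm (y - 0))) x :> ?G j" if "j \<in> {1..n}" for j
    using GDERIV_diff[OF phi_norm_diff_gderiv[OF assms(1)] phi_norm_diff_gderiv[OF assms(1,2)]]
      assms(3) that by simp
  then have "((\<lambda>y. \<Sum>j\<in>{1..n}. m j * (phi \<alpha> (norm (y - ?c j)) - phi \<alpha> (norm (y - 0))))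
      has_derivative (\<lambda>h. \<Sum>j\<in>{1..n}. m j * (h \<bullet> ?G j))) (at x)"
    unfolding gderiv_def by (intro has_derivative_sum has_derivative_mult_right)
  then show ?thesis
    by (simp add: gderiv_def hfun_def inner_sum_right)
qed

lemma norm_expJ: "norm (expJ \<theta> *v y) = norm y"
proof -
  have "(cos \<theta> * y$1 + sin \<theta> * y$2)\<^sup>2 + (cos \<theta> * y$2 - sin \<theta> * y$1)\<^sup>2 = (y$1)\<^sup>2 + (y$2)\<^sup>2"
    using sin_cos_squared_add[of \<theta>] by algebra
  then show ?thesis
    by (simp add: norm_vec_def L2_set_def sum_2 expJ_def Jmat_def matrix_vector_mult_def mat_def
        algebra_simps)
qed

lemma expJ_minus_2pi_multiple: "expJ (\<theta> - 2 * pi * real k) = expJ \<theta>"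
proof -
  have "cos (2 * pi * real k) = 1" "sin (2 * pi * real k) = 0"
    using cos_2npi[of k] sin_2npi[of k] by (simp_all add: ac_simps)
  then show ?thesis
    by (simp add: expJ_def cos_diff sin_diff)
qed

lemma xbody_periodic:
  assumes "0 < qq" "\<And>t. q j (t + 2 * pi) = q j t"
  shows "xbody q pp qq j (\<tau> + 2 * pi) = xbody q pp qq j \<tau>"
proof -
  interpret periodic_fun_simple "q j" "2 * pi"
    by unfold_locales (rule assms(2))
  have "- omega pp qq * (\<tau> + 2 * pi) / nu qq = - omega pp qq * \<tau> / nu qq - 2 * pi * real pp"
    and "(\<tau> + 2 * pi) / nu qq = \<tau> / nu qq + real qq * (2 * pi)"
    using assms(1) by (simp_all add: omega_def nu_def field_simps)
  then show ?thesis
    by (simp add: xbody_def expJ_minus_2pi_multiple plus_of_nat)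
qed

lemma hfun_periodic:
  assumes "0 < qq" "\<forall>j\<in>{1..n}. \<forall>t. q j (t + 2 * pi) = q j t"
  shows "hfun n \<alpha> m q pp qq x (\<tau> + 2 * pi) = hfun n \<alpha> m q pp qq x \<tau>"
  unfolding hfun_def using assms by (intro sum.cong) (simp_all add: xbody_periodic)

lemma norm_xbody: "norm (xbody q pp qq j \<tau>) = norm (q j (\<tau> / nu qq))"
  by (simp add: xbody_def norm_expJ)

lemma xbody_centre_of_mass:
  assumes "(\<Sum>j\<in>S. m j *\<^sub>R q j (\<tau> / nu qq)) = 0"
  shows "(\<Sum>j\<in>S. m j *\<^sub>R xbody q pp qq j \<tau>) = 0"
proof -
  have "(\<Sum>j\<in>S. m j *\<^sub>R xbody q pp qq j \<tau>)
      = expJ (- omega pp qq * \<tau> / nu qq) *v (\<Sum>j\<in>S. m j *\<^sub>R q j (\<tau> / nu qq))"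
    by (simp add: xbody_def linear_sum[OF matrix_vector_mul_linear] matrix_vector_mult_scaleR)
  then show ?thesis
    using assms by simp
qed

lemma bounded_range_periodic:
  fixes f :: "real \<Rightarrow> 'a::real_normed_vector"
  assumes "0 < p" "\<And>t. f (t + p) = f t" "continuous_on {0..p} f"
  shows "bounded (range f)"
proof -
  interpret periodic_fun_simple f p
    by unfold_locales (rule assms(2))
  have "f t \<in> f ` {0..p}" for t
  proof -
    have "t - of_int \<lfloor>t / p\<rfloor> * p \<in> {0..p}"
      using floor_divide_lower[OF assms(1), of t] floor_divide_upper[OF assms(1), of t]
      by (simp add: algebra_simps)
    then show ?thesis
      using minus_of_int[of t "\<lfloor>t / p\<rfloor>"] by (metis image_eqI)
  qed
  then have "range f \<subseteq> f ` {0..p}"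
    by blast
  moreover have "bounded (f ` {0..p})"
    using assms(3) by (intro compact_imp_bounded compact_continuous_image) auto
  ultimately show ?thesis
    using bounded_subset by blast
qed

lemma periodic_family_bounded:
  fixes q :: "'i \<Rightarrow> real \<Rightarrow> 'a::real_normed_vector"
  assumes "finite I" "0 < p" "\<And>j t. j \<in> I \<Longrightarrow> q j (t + p) = q j t"
    and "\<And>j. j \<in> I \<Longrightarrow> continuous_on {0..p} (q j)"
  obtains R where "0 < R" "\<And>j t. j \<in> I \<Longrightarrow> norm (q j t) \<le> R"
proof -
  have "bounded (range (q j))" if "j \<in> I" for j
    using assms(2) assms(3)[OF that] assms(4)[OF that] by (rule bounded_range_periodic)
  then have "bounded (\<Union>j\<in>I. range (q j))"
    using assms(1) by (intro bounded_UN) auto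
  then show thesis
    using that unfolding bounded_pos by blast
qed

lemma compact_norm_bounds:
  fixes K :: "'a::euclidean_space set"
  assumes "compact K" "0 \<notin> K"
  obtains d B where "0 < d" "d \<le> B" "\<And>x. x \<in> K \<Longrightarrow> d \<le> norm x \<and> norm x \<le> B"
proof -
  obtain d where d: "0 < d" "\<forall>x\<in>K. d \<le> norm x"
    using separate_point_closed[of K 0] assms compact_imp_closed by (metis dist_0_norm)
  obtain B where "\<forall>x\<in>K. norm x \<le> B"
    using assms(1) compact_imp_bounded bounded_iff by blast
  then show thesis
    using that[of d "max d B"] d by force
qed

lemma hfun_gderiv_le:
  assumes alpha: "1 \<le> \<alpha>" and m: "\<forall>j\<in>{1..n}. 0 \<le> m j" "sum m {1..n} = 1"
    and com: "\<forall>t. (\<Sum>j\<in>{1..n}. m j *\<^sub>R q j t) = 0"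
    and R: "0 < R" "\<And>j t. j \<in> {1..n} \<Longrightarrow> norm (q j t) \<le> R"
    and dB: "0 < d" "d \<le> B"
  obtains C where "\<And>pp qq \<tau> x. eps \<alpha> pp qq * R < d / 2 \<Longrightarrow> d \<le> norm x \<Longrightarrow> norm x \<le> B \<Longrightarrow>
    \<exists>g. (GDERIV (\<lambda>y. hfun n \<alpha> m q pp qq y \<tau>) x :> g) \<and> norm g \<le> C * (eps \<alpha> pp qq)\<^sup>2"
proof -
  obtain C where C: "\<And>S w (v :: nat \<Rightarrow> real^2) x \<rho>.
      \<forall>j\<in>S. 0 \<le> w j \<Longrightarrow> sum w S = 1 \<Longrightarrow> (\<Sum>j\<in>S. w j *\<^sub>R v j) = 0 \<Longrightarrow>
      \<forall>j\<in>S. norm (v j) \<le> \<rho> \<Longrightarrow> \<rho> \<le> d / 2 \<Longrightarrow> d \<le> norm x \<Longrightarrow> norm x \<le> B \<Longrightarrow>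
      norm (\<Sum>j\<in>S. w j *\<^sub>R (radial_kernel (\<alpha> + 1) x - radial_kernel (\<alpha> + 1) (x - v j))) \<le> C * \<rho>\<^sup>2"
    by (rule radial_kernel_mean_difference_le[of "\<alpha> + 1" d B]) (use alpha dB in auto)
  show thesis
  proof (rule that[of "C * R\<^sup>2"])
    fix pp qq :: nat and \<tau> and x :: "real^2"
    assume small: "eps \<alpha> pp qq * R < d / 2" and x: "d \<le> norm x" "norm x \<le> B"
    define \<epsilon> where "\<epsilon> = eps \<alpha> pp qq"
    define c where "c j = \<epsilon> *\<^sub>R xbody q pp qq j \<tau>" for j
    have c_le: "\<forall>j\<in>{1..n}. norm (c j) \<le> \<epsilon> * R"
      using R(2) by (simp add: c_def \<epsilon>_def eps_def norm_xbody mult_left_mono)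
    have "norm (c j) < norm x" if "j \<in> {1..n}" for j
      using c_le that small dB(1) x(1) unfolding \<epsilon>_def by fastforce
    then have "x \<noteq> c j" if "j \<in> {1..n}" for j
      using that by fastforce
    moreover have "x \<noteq> 0"
      using dB(1) x(1) by auto
    ultimately have gradient: "GDERIV (\<lambda>y. hfun n \<alpha> m q pp qq y \<tau>) x :>
        (\<Sum>j\<in>{1..n}. m j *\<^sub>R (radial_kernel (\<alpha> + 1) x - radial_kernel (\<alpha> + 1) (x - c j)))"
      using hfun_gderiv[OF alpha] by (simp add: c_def \<epsilon>_def)
    have "(\<Sum>j\<in>{1..n}. m j *\<^sub>R c j) = \<epsilon> *\<^sub>R (\<Sum>j\<in>{1..n}. m j *\<^sub>R xbody q pp qq j \<tau>)"
      by (simp add: c_def scaleR_sum_right mult.commute)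
    also have "\<dots> = 0"
      using com by (simp add: xbody_centre_of_mass)
    finally have centred: "(\<Sum>j\<in>{1..n}. m j *\<^sub>R c j) = 0" .
    have "norm (\<Sum>j\<in>{1..n}. m j *\<^sub>R (radial_kernel (\<alpha> + 1) x - radial_kernel (\<alpha> + 1) (x - c j)))
        \<le> C * (\<epsilon> * R)\<^sup>2"
      by (rule C) (use m centred c_le small x in \<open>auto simp: \<epsilon>_def\<close>)
    moreover have "C * (\<epsilon> * R)\<^sup>2 = C * R\<^sup>2 * (eps \<alpha> pp qq)\<^sup>2"
      by (simp add: \<epsilon>_def power_mult_distrib)
    ultimately show "\<exists>g. (GDERIV (\<lambda>y. hfun n \<alpha> m q pp qq y \<tau>) x :> g) \<and> norm g \<le> C * R\<^sup>2 * (eps \<alpha> pp qq)\<^sup>2"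
      using gradient by auto
  qed
qed

theorem proposition2:
  fixes n :: nat and \<alpha> :: real and m :: "nat \<Rightarrow> real"
    and q qd :: "nat \<Rightarrow> real \<Rightarrow> real^2"
  assumes n2: "n \<ge> 2"
    and alpha: "\<alpha> \<ge> 1"
    and mpos: "\<forall>j\<in>{1..n}. m j > 0"
    and msum: "(\<Sum>j\<in>{1..n}. m j) = 1"
    and vel: "\<forall>j\<in>{1..n}. \<forall>t. (q j has_vector_derivative qd j t) (at t)"
    and eqn: "\<forall>j\<in>{1..n}. \<forall>t. (qd j has_vector_derivative
               (- (\<Sum>k\<in>{1..n} - {j}. m k *\<^sub>R ((1 / norm (q j t - q k t) powr (\<alpha> + 1)) *\<^sub>R (q j t - q k t)))))
               (at t)"
    and nocoll: "\<forall>j\<in>{1..n}. \<forall>k\<in>{1..n}. \<forall>t. j \<noteq> k \<longrightarrow> q j t \<noteq> q k t"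
    and per: "\<forall>j\<in>{1..n}. \<forall>t. q j (t + 2 * pi) = q j t"
    and com: "\<forall>t. (\<Sum>j\<in>{1..n}. m j *\<^sub>R q j t) = 0"
  shows "(\<forall>pp qq. pp > 0 \<longrightarrow> qq > 0 \<longrightarrow>
            (\<forall>x \<tau>. hfun n \<alpha> m q pp qq x (\<tau> + 2 * pi) = hfun n \<alpha> m q pp qq x \<tau>))
       \<and> (\<forall>K. compact K \<and> 0 \<notin> K \<longrightarrow>
            (\<exists>C \<delta>. \<delta> > 0 \<and>
              (\<forall>pp qq. pp > 0 \<longrightarrow> qq > 0 \<longrightarrow> eps \<alpha> pp qq < \<delta> \<longrightarrow>
                (\<forall>\<tau>. \<forall>x\<in>K. \<exists>g. (GDERIV (\<lambda>y. hfun n \<alpha> m q pp qq y \<tau>) x :> g)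
                      \<and> norm g \<le> C * (eps \<alpha> pp qq)\<^sup>2))))"
proof (intro conjI allI impI)
  fix pp qq :: nat and x \<tau>
  assume "0 < qq"
  then show "hfun n \<alpha> m q pp qq x (\<tau> + 2 * pi) = hfun n \<alpha> m q pp qq x \<tau>"
    using per by (rule hfun_periodic)
next
  fix K :: "(real^2) set"
  assume K: "compact K \<and> 0 \<notin> K"
  obtain d B where dB: "0 < d" "d \<le> B" "\<And>x. x \<in> K \<Longrightarrow> d \<le> norm x \<and> norm x \<le> B"
    by (rule compact_norm_bounds[of K]) (use K in auto)
  have continuous: "continuous_on {0..2 * pi} (q j)" if "j \<in> {1..n}" for j
    using vel that by (intro continuous_at_imp_continuous_on ballI has_vector_derivative_continuous) blast
  obtain R where R: "0 < R" "\<And>j t. j \<in> {1..n} \<Longrightarrow> norm (q j t) \<le> R"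
    by (rule periodic_family_bounded[of "{1..n}" "2 * pi" q]) (use per continuous in auto)
  obtain C where C: "\<And>pp qq \<tau> x. eps \<alpha> pp qq * R < d / 2 \<Longrightarrow> d \<le> norm x \<Longrightarrow> norm x \<le> B \<Longrightarrow>
      \<exists>g. (GDERIV (\<lambda>y. hfun n \<alpha> m q pp qq y \<tau>) x :> g) \<and> norm g \<le> C * (eps \<alpha> pp qq)\<^sup>2"
    by (rule hfun_gderiv_le[OF alpha _ msum com R dB(1,2)]) (use mpos in \<open>auto simp: less_imp_le\<close>)
  have small: "eps \<alpha> pp qq * R < d / 2" if "eps \<alpha> pp qq < d / (2 * R)" for pp qq
    using that R(1) by (simp add: field_simps)
  show "\<exists>C \<delta>. 0 < \<delta> \<and> (\<forall>pp qq. 0 < pp \<longrightarrow> 0 < qq \<longrightarrow> eps \<alpha> pp qq < \<delta> \<longrightarrow>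
      (\<forall>\<tau>. \<forall>x\<in>K. \<exists>g. (GDERIV (\<lambda>y. hfun n \<alpha> m q pp qq y \<tau>) x :> g) \<and> norm g \<le> C * (eps \<alpha> pp qq)\<^sup>2))"
    by (rule exI[of _ C], rule exI[of _ "d / (2 * R)"]) (use C small dB(1,3) R(1) in auto)
qed

end
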